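(* For $|q|<1$, \begin{align*} S_0(q^2)+2T_0(q^2)&=\frac{(q^2;q^2)_{\infty}\left[(q;q^2)^3_{\infty}+(-q;q^2)^3_{\infty}\right]}{2(-q^2;q^2)_{\infty}},\\ S_1(q^2)+2T_1(q^2)&=\frac{(q^2;q^2)_{\infty}\left[(-q;q^2)^3_{\infty}-(q;q^2)^3_{\infty}\right]}{2q(-q^2;q^2)_{\infty}}. \end{align*}
   Context: For $n\ge 0$, $(a;q)_n=\prod_{j=0}^{n-1}(1-aq^j)$, $(a;q)_\infty=\prod_{j\ge0}(1-aq^j)$. Eighth order mock theta functions: $S_0(q)=\sum_{n\ge0}\frac{q^{n^2}(-q;q^2)_n}{(-q^2;q^2)_n}$, $S_1(q)=\sum_{n\ge0}\frac{q^{n(n+2)}(-q;q^2)_n}{(-q^2;q^2)_n}$, $T_0(q)=\sum_{n\ge0}\frac{q^{(n+1)(n+2)}(-q^2;q^2)_n}{(-q;q^2)_{n+1}}$, $T_1(q)=\sum_{n\ge0}\frac{q^{n(n+1)}(-q^2;q^2)_n}{(-q;q^2)_{n+1}}$. *)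

theory Defs
  imports "HOL-Analysis.Analysis"
begin

definition qpoch :: "complex \<Rightarrow> complex \<Rightarrow> nat \<Rightarrow> complex" where
  "qpoch a q n = (\<Prod>j<n. 1 - a * q ^ j)"

definition qpoch_inf :: "complex \<Rightarrow> complex \<Rightarrow> complex" where
  "qpoch_inf a q = (\<Prod>j. 1 - a * q ^ j)"

definition S0 :: "complex \<Rightarrow> complex" where
  "S0 q = (\<Sum>n. q ^ (n^2) * qpoch (-q) (q^2) n / qpoch (-(q^2)) (q^2) n)"

definition S1 :: "complex \<Rightarrow> complex" where
  "S1 q = (\<Sum>n. q ^ (n*(n+2)) * qpoch (-q) (q^2) n / qpoch (-(q^2)) (q^2) n)"

definition T0 :: "complex \<Rightarrow> complex" where
  "T0 q = (\<Sum>n. q ^ ((n+1)*(n+2)) * qpoch (-(q^2)) (q^2) n / qpoch (-q) (q^2) (n+1))"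

definition T1 :: "complex \<Rightarrow> complex" where
  "T1 q = (\<Sum>n. q ^ (n*(n+1)) * qpoch (-(q^2)) (q^2) n / qpoch (-q) (q^2) (n+1))"

end

theory Submission
  imports Defs
begin

text \<open>Put \<open>q = x^2\<close> and consider the bilateral series \<open>\<Sum>\<^sub>n (1 - x q^(2n)) q^(n^2) A_n\<close>,
  where \<open>A_n = (-q;q^2)_n / (-q^2;q^2)_n\<close> is continued to negative \<open>n\<close>. Its terms with \<open>n \<ge> 0\<close>
  sum to \<open>S0(q) - x S1(q)\<close> and those with \<open>n < 0\<close> to \<open>2 T0(q) - 2x T1(q)\<close>. Dividing the
  \<open>n\<close>-th term by \<open>(q;q)_(N-n) (q;q)_(N+n) (x;q)_(N-n) (x;q)_(N+n+1)\<close> and summing over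
  \<open>|n| \<le> N\<close> gives exactly \<open>(x;q)_(2N) / (q^2;q^2)_(2N)\<close>, which is proved by induction on \<open>N\<close>
  with a Wilf--Zeilberger certificate. Letting \<open>N \<rightarrow> \<infinity>\<close> (Tannery's theorem) yields
  \<open>(S0 + 2 T0)(q) - x (S1 + 2 T1)(q) = (q;q)_\<infinity> (x;q)_\<infinity>^3 / (-q;q)_\<infinity>\<close>, and the two
  identities are the half-sum and half-difference of the cases \<open>x = \<plusminus>q\<close> (the theorem's \<open>q\<close>
  playing the role of \<open>x\<close>).\<close>

section \<open>q-Pochhammer symbols\<close>

lemma qpoch_0 [simp]: "qpoch a q 0 = 1"
  by (simp add: qpoch_def)

lemma qpoch_Suc: "qpoch a q (Suc n) = qpoch a q n * (1 - a * q ^ n)"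
  by (simp add: qpoch_def)

lemma qpoch_nat_add_one:
  assumes "0 \<le> m"
  shows "qpoch a q (nat (m + 1)) = qpoch a q (nat m) * (1 - a * q powi m)"
proof -
  have "nat (m + 1) = Suc (nat m)" using assms by simp
  then show ?thesis using assms by (simp add: qpoch_Suc power_int_def)
qed

lemma qpoch_minus_one_Suc: "qpoch (-1) q (Suc k) = 2 * qpoch (-q) q k"
  unfolding qpoch_def by (subst prod.lessThan_Suc_shift) (simp add: power_Suc)

lemma one_minus_mult_power_nonzero:
  fixes a q :: complex
  assumes "norm a < 1" "norm q \<le> 1"
  shows "1 - a * q ^ j \<noteq> 0"
proof
  assume "1 - a * q ^ j = 0"
  then have "1 = norm a * norm q ^ j"
    by (metis eq_iff_diff_eq_0 norm_mult norm_one norm_power)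
  also have "\<dots> \<le> norm a"
    using assms by (simp add: mult_left_le power_le_one)
  finally show False using assms(1) by simp
qed

lemma qpoch_nonzero:
  fixes a q :: complex
  assumes "norm a < 1" "norm q \<le> 1"
  shows "qpoch a q n \<noteq> 0"
  using one_minus_mult_power_nonzero[OF assms] by (simp add: qpoch_def)

lemma convergent_prod_qpoch:
  fixes a q :: complex
  assumes "norm a < 1" "norm q < 1"
  shows "convergent_prod (\<lambda>j. 1 - a * q ^ j)"
proof -
  have "summable (\<lambda>j. norm (- a * q ^ j))"
    using assms by (simp add: norm_mult norm_power summable_mult summable_geometric)
  moreover have "- a * q ^ j \<noteq> -1" for j
    using one_minus_mult_power_nonzero[of a q j] assms by (auto simp: add_eq_0_iff)
  ultimately have "convergent_prod (\<lambda>j. 1 + (- a * q ^ j))"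
    by (rule summable_imp_convergent_prod_complex)
  then show ?thesis by simp
qed

lemma qpoch_LIMSEQ:
  fixes a q :: complex
  assumes "norm a < 1" "norm q < 1"
  shows "(\<lambda>n. qpoch a q n) \<longlonglongrightarrow> qpoch_inf a q"
proof -
  have "(\<lambda>n. \<Prod>i\<le>n. 1 - a * q ^ i) \<longlonglongrightarrow> qpoch_inf a q"
    unfolding qpoch_inf_def by (rule convergent_prod_LIMSEQ[OF convergent_prod_qpoch[OF assms]])
  then have "(\<lambda>n. qpoch a q (Suc n)) \<longlonglongrightarrow> qpoch_inf a q"
    by (simp add: qpoch_def lessThan_Suc_atMost)
  then show ?thesis by (rule LIMSEQ_imp_Suc)
qed

lemma qpoch_inf_nonzero:
  fixes a q :: complex
  assumes "norm a < 1" "norm q < 1"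
  shows "qpoch_inf a q \<noteq> 0"
  unfolding qpoch_inf_def
  using prodinf_nonzero[OF convergent_prod_qpoch[OF assms]] one_minus_mult_power_nonzero assms
  by simp

lemma qpoch_inf_square:
  fixes q :: complex
  assumes "norm q < 1"
  shows "qpoch_inf (q^2) (q^2) = qpoch_inf q q * qpoch_inf (-q) q"
proof -
  have "qpoch_inf q q * qpoch_inf (-q) q = (\<Prod>j. (1 - q * q ^ j) * (1 - (-q) * q ^ j))"
    unfolding qpoch_inf_def using assms by (intro prodinf_mult convergent_prod_qpoch) auto
  also have "\<dots> = (\<Prod>j. 1 - q^2 * (q^2) ^ j)"
    by (simp add: algebra_simps power2_eq_square power_mult_distrib)
  finally show ?thesis unfolding qpoch_inf_def by simp
qed

lemma sum_power_le_inverse_one_minus: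
  fixes r :: real
  assumes "0 \<le> r" "r < 1"
  shows "(\<Sum>j<n. r ^ j) \<le> 1 / (1 - r)"
proof -
  have "(\<Sum>j<n. r ^ j) = (1 - r ^ n) / (1 - r)" using assms by (simp add: sum_gp_strict)
  also have "\<dots> \<le> 1 / (1 - r)" using assms by (intro divide_right_mono) auto
  finally show ?thesis .
qed

lemma norm_qpoch_le:
  fixes a q :: complex
  assumes "norm q < 1"
  shows "norm (qpoch a q n) \<le> exp (norm a / (1 - norm q))"
proof -
  have "norm (qpoch a q n) \<le> (\<Prod>j<n. norm (1 - a * q ^ j))"
    unfolding qpoch_def by (simp add: prod_norm)
  also have "\<dots> \<le> (\<Prod>j<n. exp (norm a * norm q ^ j))"
  proof (rule prod_mono, safe)
    fix j
    have "norm (1 - a * q ^ j) \<le> 1 + norm a * norm q ^ j"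
      by (metis norm_mult norm_one norm_power norm_triangle_ineq4)
    also have "\<dots> \<le> exp (norm a * norm q ^ j)" by (rule exp_ge_add_one_self)
    finally show "norm (1 - a * q ^ j) \<le> exp (norm a * norm q ^ j)" .
  qed simp
  also have "\<dots> = exp (norm a * (\<Sum>j<n. norm q ^ j))"
    by (simp add: exp_sum sum_distrib_left)
  also have "\<dots> \<le> exp (norm a * (1 / (1 - norm q)))"
    using assms by (intro exp_le_cancel_iff[THEN iffD2] mult_left_mono sum_power_le_inverse_one_minus) auto
  finally show ?thesis by simp
qed

lemma norm_inverse_qpoch_le:
  fixes a q :: complex
  assumes q: "norm q < 1" and a: "norm a < 1"
  shows "norm (1 / qpoch a q n) \<le> exp (norm a / ((1 - norm a) * (1 - norm q)))"
proof -
  have "norm (1 / qpoch a q n) = (\<Prod>j<n. 1 / norm (1 - a * q ^ j))"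
    unfolding qpoch_def by (simp add: prod_norm prod_dividef norm_divide)
  also have "\<dots> \<le> (\<Prod>j<n. exp (norm a / (1 - norm a) * norm q ^ j))"
  proof (rule prod_mono, safe)
    fix j
    have small: "norm a * norm q ^ j \<le> norm a"
      using q by (simp add: mult_left_le power_le_one)
    then have pos: "0 < 1 - norm a * norm q ^ j" using a by linarith
    have "1 - norm a * norm q ^ j \<le> norm (1 - a * q ^ j)"
      by (metis norm_mult norm_one norm_power norm_triangle_ineq2)
    then have "1 / norm (1 - a * q ^ j) \<le> 1 / (1 - norm a * norm q ^ j)"
      using pos by (intro divide_left_mono mult_pos_pos) auto
    also have "\<dots> = 1 + norm a * norm q ^ j / (1 - norm a * norm q ^ j)"
      using pos by (simp add: field_simps)
    also have "\<dots> \<le> 1 + norm a * norm q ^ j / (1 - norm a)"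
      using pos small a by (simp add: divide_left_mono)
    also have "\<dots> \<le> exp (norm a / (1 - norm a) * norm q ^ j)"
      using exp_ge_add_one_self[of "norm a / (1 - norm a) * norm q ^ j"] by simp
    finally show "1 / norm (1 - a * q ^ j) \<le> exp (norm a / (1 - norm a) * norm q ^ j)" .
  qed simp
  also have "\<dots> = exp (norm a / (1 - norm a) * (\<Sum>j<n. norm q ^ j))"
    by (simp add: exp_sum sum_distrib_left)
  also have "\<dots> \<le> exp (norm a / (1 - norm a) * (1 / (1 - norm q)))"
    using q a by (intro exp_le_cancel_iff[THEN iffD2] mult_left_mono sum_power_le_inverse_one_minus) auto
  finally show ?thesis by simp
qed

section \<open>Convergence of the mock theta series\<close>

definition S0_term :: "complex \<Rightarrow> nat \<Rightarrow> complex" where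
  "S0_term q n = q ^ (n^2) * qpoch (-q) (q^2) n / qpoch (-(q^2)) (q^2) n"

definition S1_term :: "complex \<Rightarrow> nat \<Rightarrow> complex" where
  "S1_term q n = q ^ (n*(n+2)) * qpoch (-q) (q^2) n / qpoch (-(q^2)) (q^2) n"

definition T0_term :: "complex \<Rightarrow> nat \<Rightarrow> complex" where
  "T0_term q n = q ^ ((n+1)*(n+2)) * qpoch (-(q^2)) (q^2) n / qpoch (-q) (q^2) (n+1)"

definition T1_term :: "complex \<Rightarrow> nat \<Rightarrow> complex" where
  "T1_term q n = q ^ (n*(n+1)) * qpoch (-(q^2)) (q^2) n / qpoch (-q) (q^2) (n+1)"

lemma S0_eq_suminf: "S0 q = (\<Sum>n. S0_term q n)"
  unfolding S0_def S0_term_def ..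

lemma S1_eq_suminf: "S1 q = (\<Sum>n. S1_term q n)"
  unfolding S1_def S1_term_def ..

lemma T0_eq_suminf: "T0 q = (\<Sum>n. T0_term q n)"
  unfolding T0_def T0_term_def ..

lemma T1_eq_suminf: "T1 q = (\<Sum>n. T1_term q n)"
  unfolding T1_def T1_term_def ..

lemma summable_norm_power_mult_bounded:
  fixes q :: complex and A B :: "nat \<Rightarrow> complex" and e :: "nat \<Rightarrow> nat"
  assumes q: "norm q < 1" and e: "\<And>k. k \<le> e k"
    and A: "\<And>k. norm (A k) \<le> CA" and B: "\<And>k. norm (1 / B k) \<le> CB"
  shows "summable (\<lambda>k. norm (q ^ e k * A k / B k))"
proof (rule summable_comparison_test)
  show "summable (\<lambda>k. CA * CB * norm q ^ k)"
    using q by (intro summable_mult summable_geometric) auto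
  have "0 \<le> CA" using A[of 0] norm_ge_zero order_trans by blast
  then have "norm q ^ e k * (norm (A k) * norm (1 / B k)) \<le> norm q ^ k * (CA * CB)" for k
    using q e A B by (intro mult_mono power_decreasing) auto
  then show "\<exists>N. \<forall>k\<ge>N. norm (norm (q ^ e k * A k / B k)) \<le> CA * CB * norm q ^ k"
    by (simp add: norm_mult norm_divide norm_power mult_ac)
qed

context
  fixes q :: complex
  assumes q: "norm q < 1"
begin

lemma norm_square_less_one: "norm (q^2) < 1"
  using q by (simp add: norm_power power_less_one_iff)

lemmas summable_norm_term =
  summable_norm_power_mult_bounded[OF q _ norm_qpoch_le[OF norm_square_less_one]
    norm_inverse_qpoch_le[OF norm_square_less_one]]

lemma summable_norm_S0_term: "summable (\<lambda>n. norm (S0_term q n))"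
  unfolding S0_term_def
  by (rule summable_norm_term) (use q in \<open>auto simp: norm_square_less_one\<close>, simp add: power2_eq_square)

lemma summable_norm_S1_term: "summable (\<lambda>n. norm (S1_term q n))"
  unfolding S1_term_def
  by (rule summable_norm_term) (use q in \<open>auto simp: norm_square_less_one\<close>)

lemma summable_norm_T0_term: "summable (\<lambda>n. norm (T0_term q n))"
  unfolding T0_term_def
  by (rule summable_norm_term) (use q in \<open>auto simp: norm_square_less_one\<close>)

lemma summable_norm_T1_term: "summable (\<lambda>n. norm (T1_term q n))"
  unfolding T1_term_def
  by (rule summable_norm_term) (use q in \<open>auto simp: norm_square_less_one\<close>)

end

lemma summable_norm_diff_scaled:
  fixes f g :: "nat \<Rightarrow> complex"
  assumes "summable (\<lambda>k. norm (f k))" "summable (\<lambda>k. norm (g k))"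
  shows "summable (\<lambda>k. norm (a * f k - b * g k))"
proof (rule summable_comparison_test)
  show "summable (\<lambda>k. norm a * norm (f k) + norm b * norm (g k))"
    using assms by (intro summable_add summable_mult)
  show "\<exists>N. \<forall>k\<ge>N. norm (norm (a * f k - b * g k)) \<le> norm a * norm (f k) + norm b * norm (g k)"
    by (auto intro!: order_trans[OF norm_triangle_ineq4] simp: norm_mult)
qed

lemma suminf_diff_scaled:
  fixes f g :: "nat \<Rightarrow> complex"
  assumes "summable (\<lambda>k. norm (f k))" "summable (\<lambda>k. norm (g k))"
  shows "(\<Sum>k. a * f k - b * g k) = a * (\<Sum>k. f k) - b * (\<Sum>k. g k)"
proof -
  have "summable f" "summable g" using assms by (auto intro: summable_norm_cancel)
  then have "(\<Sum>k. a * f k - b * g k) = (\<Sum>k. a * f k) - (\<Sum>k. b * g k)"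
    by (intro suminf_diff[symmetric] summable_mult)
  then show ?thesis by (simp add: suminf_mult \<open>summable f\<close> \<open>summable g\<close>)
qed

lemma sum_int_telescope:
  fixes f :: "int \<Rightarrow> 'a :: ab_group_add"
  shows "(\<Sum>n\<in>{lo..<lo + int k}. f (n + 1) - f n) = f (lo + int k) - f lo"
proof (induction k)
  case (Suc k)
  have "{lo..<lo + int (Suc k)} = insert (lo + int k) {lo..<lo + int k}" by auto
  then show ?case using Suc by (simp add: algebra_simps)
qed simp

lemma sum_symmetric_int_interval:
  fixes f :: "int \<Rightarrow> 'a :: comm_monoid_add"
  shows "(\<Sum>n\<in>{-int N..int N}. f n) = (\<Sum>k<Suc N. f (int k)) + (\<Sum>k<N. f (- int (Suc k)))"
proof -
  have split: "{-int N..int N} = int ` {..<Suc N} \<union> (\<lambda>k. - int (Suc k)) ` {..<N}"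
  proof (intro set_eqI iffI)
    fix n assume n: "n \<in> {-int N..int N}"
    show "n \<in> int ` {..<Suc N} \<union> (\<lambda>k. - int (Suc k)) ` {..<N}"
    proof (cases "0 \<le> n")
      case True
      then have "n = int (nat n)" "nat n \<in> {..<Suc N}" using n by auto
      then show ?thesis by blast
    next
      case False
      then have "n = - int (Suc (nat (-n-1)))" "nat (-n-1) \<in> {..<N}" using n by auto
      then show ?thesis by blast
    qed
  qed auto
  have "(\<Sum>n\<in>{-int N..int N}. f n)
      = (\<Sum>n\<in>int ` {..<Suc N}. f n) + (\<Sum>n\<in>(\<lambda>k. - int (Suc k)) ` {..<N}. f n)"
    unfolding split by (rule sum.union_disjoint) auto
  also have "\<dots> = (\<Sum>k<Suc N. f (int k)) + (\<Sum>k<N. f (- int (Suc k)))"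
    by (simp add: sum.reindex inj_on_def)
  finally show ?thesis .
qed

lemma filterlim_nat_add_const: "filterlim (\<lambda>N. nat (int N + c)) at_top sequentially"
  unfolding filterlim_at_top
proof
  fix Z :: nat
  show "eventually (\<lambda>N. Z \<le> nat (int N + c)) sequentially"
    using eventually_ge_at_top[of "Z + nat (- c)"] by eventually_elim auto
qed

lemma qpoch_nat_add_const_LIMSEQ:
  fixes a q :: complex
  assumes "norm a < 1" "norm q < 1"
  shows "(\<lambda>N. qpoch a q (nat (int N + c))) \<longlonglongrightarrow> qpoch_inf a q"
  by (rule filterlim_compose[OF qpoch_LIMSEQ[OF assms] filterlim_nat_add_const])

lemma tannery_quotient_LIMSEQ:
  fixes t :: "nat \<Rightarrow> complex" and w :: "nat \<Rightarrow> nat \<Rightarrow> complex" and m :: "nat \<Rightarrow> nat"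
  assumes w_lim: "\<And>k. (\<lambda>N. w N k) \<longlonglongrightarrow> L" and L: "L \<noteq> 0"
    and w_bound: "\<And>N k. norm (1 / w N k) \<le> B"
    and t: "summable (\<lambda>k. norm (t k))" and m: "filterlim m at_top sequentially"
  shows "(\<lambda>N. \<Sum>k<m N. t k / w N k) \<longlonglongrightarrow> (\<Sum>k. t k / L)"
proof -
  define a where "a k N = (if k < m N then t k / w N k else 0)" for k N
  have "(\<lambda>N. a k N) \<longlonglongrightarrow> t k / L" for k
  proof (rule Lim_transform_eventually)
    show "(\<lambda>N. t k / w N k) \<longlonglongrightarrow> t k / L"
      by (intro tendsto_divide tendsto_const w_lim L)
    show "eventually (\<lambda>N. t k / w N k = a k N) sequentially"
      using filterlim_at_top[THEN iffD1, OF m, rule_format, of "Suc k"]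
      by eventually_elim (simp add: a_def)
  qed
  moreover have "eventually (\<lambda>(k, N). norm (a k N) \<le> norm (t k) * B) (at_top \<times>\<^sub>F sequentially)"
  proof (rule always_eventually, clarify)
    fix k N
    have "norm (t k / w N k) = norm (t k) * norm (1 / w N k)" by (simp add: norm_divide)
    also have "\<dots> \<le> norm (t k) * B" by (intro mult_left_mono w_bound) auto
    finally show "norm (a k N) \<le> norm (t k) * B"
      using order_trans[OF norm_ge_zero w_bound] by (auto simp: a_def)
  qed
  moreover have "summable (\<lambda>k. norm (t k) * B)" using t by (rule summable_mult2)
  ultimately have "(\<lambda>N. \<Sum>k. a k N) \<longlonglongrightarrow> (\<Sum>k. t k / L)"
    using tannerys_theorem[of a "\<lambda>k. t k / L"] by simp
  moreover have "(\<Sum>k. a k N) = (\<Sum>k<m N. t k / w N k)" for N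
    by (subst suminf_finite[of "{..<m N}"]) (auto simp: a_def)
  ultimately show ?thesis by simp
qed

text \<open>For negative \<open>n\<close> this is the value of the quotient under the continuation
  \<open>(a;p)_(-m) = 1 / (a p^(-m); p)_m\<close>; it makes the recurrence \<open>bilat_coeff_step\<close> hold for
  all \<open>n\<close>.\<close>
definition bilat_coeff :: "complex \<Rightarrow> int \<Rightarrow> complex" where
  "bilat_coeff q n =
     (if 0 \<le> n then qpoch (-q) (q^2) (nat n) / qpoch (-(q^2)) (q^2) (nat n)
      else q ^ nat (-n) * qpoch (-1) (q^2) (nat (-n)) / qpoch (-q) (q^2) (nat (-n)))"

lemma bilat_coeff_nat: "bilat_coeff q (int k) = qpoch (-q) (q^2) k / qpoch (-(q^2)) (q^2) k"
  by (simp add: bilat_coeff_def)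

lemma bilat_coeff_neg: "bilat_coeff q (- int k) = q ^ k * qpoch (-1) (q^2) k / qpoch (-q) (q^2) k"
  by (cases "k = 0") (auto simp: bilat_coeff_def)

lemma bilat_coeff_step:
  fixes q :: complex
  assumes q0: "q \<noteq> 0" and q1: "norm q < 1"
  shows "bilat_coeff q (n + 1) * (1 + q^2 * (q powi n)^2) = bilat_coeff q n * (1 + q * (q powi n)^2)"
proof (cases "0 \<le> n")
  case True
  then obtain k where k: "n = int k" by (metis nonneg_eq_int)
  have sq: "(q powi n)^2 = (q^2)^k" using k by (simp add: power_mult[symmetric] mult.commute)
  have "qpoch (-(q^2)) (q^2) k \<noteq> 0" "1 + q^2 * (q^2)^k \<noteq> 0"
    using qpoch_nonzero[of "-(q^2)" "q^2" k] one_minus_mult_power_nonzero[of "-(q^2)" "q^2" k]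
      norm_square_less_one[OF q1] by (simp_all add: less_imp_le)
  moreover have "bilat_coeff q (n + 1) = qpoch (-q) (q^2) k * (1 + q * (q^2)^k)
      / (qpoch (-(q^2)) (q^2) k * (1 + q^2 * (q^2)^k))"
    using bilat_coeff_nat[of q "Suc k"] k by (simp add: qpoch_Suc add.commute)
  ultimately show ?thesis
    unfolding sq using k by (simp add: bilat_coeff_nat)
next
  case False
  define k where "k = nat (-n - 1)"
  define t where "t = q ^ k"
  define c where "c = qpoch (-1) (q^2) k"
  define d where "d = qpoch (-q) (q^2) k"
  have n: "n = - int (Suc k)" and n1: "n + 1 = - int k" using False by (simp_all add: k_def)
  have t0: "t \<noteq> 0" using q0 by (simp add: t_def)
  have d0: "d \<noteq> 0" unfolding d_def using q1 norm_square_less_one[OF q1] by (simp add: qpoch_nonzero)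
  have tt: "(q^2)^k = t^2" by (simp add: t_def flip: power_mult) (simp add: mult.commute)
  have e0: "1 + q * t^2 \<noteq> 0"
    using one_minus_mult_power_nonzero[of "-q" "q^2" k] q1 norm_square_less_one[OF q1]
    by (simp add: tt less_imp_le)
  have pow: "(q powi n)^2 = 1 / (q^2 * t^2)"
    by (simp add: n t_def power_int_def power_inverse nat_add_distrib divide_inverse
        power_mult_distrib flip: power_mult)
  have h: "1 + q * (1 / (q^2 * t^2)) = (1 + q * t^2) / (q * t^2)"
    using q0 t0 by (simp add: field_simps power2_eq_square)
  have "bilat_coeff q (n + 1) * (1 + q^2 * (q powi n)^2) = c * (1 + t^2) / (t * d)"
    unfolding n1 bilat_coeff_neg pow t_def[symmetric] c_def[symmetric] d_def[symmetric]
    using q0 t0 d0 by (simp add: field_simps power2_eq_square)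
  also have "\<dots> = q * t * (c * (1 + t^2)) / (d * (1 + q * t^2)) * ((1 + q * t^2) / (q * t^2))"
    unfolding times_divide_times_eq using q0 t0 d0 e0 by (subst frac_eq_eq) (auto, algebra)
  also have "\<dots> = bilat_coeff q n * (1 + q * (q powi n)^2)"
    unfolding pow h unfolding n bilat_coeff_neg qpoch_Suc power_Suc tt
      t_def[symmetric] c_def[symmetric] d_def[symmetric]
    by simp
  finally show ?thesis .
qed

section \<open>A Wilf--Zeilberger certificate\<close>

text \<open>With \<open>u = x^(2n)\<close> and \<open>X = x^(2N)\<close>, \<open>summand_ratio\<close>, \<open>weight_ratio\<close> and \<open>rhs_ratio\<close> are the
  quotients of consecutive terms of the finite identity proved below (in \<open>n\<close>, in \<open>N\<close>, and of its
  right-hand side), and \<open>wz_cert\<close> is a rational certificate in the sense of Wilf and Zeilberger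
  that turns its summands into telescoping differences.\<close>
definition cert_poly :: "complex \<Rightarrow> complex \<Rightarrow> complex \<Rightarrow> complex" where
  "cert_poly x X u = x^2*X^2*(1-x^3*X^2)*u^2 - x*(1+x)*X*(1-x^5*X^4)*u + x^3*X^2*(1-x^3*X^2)"

definition cert_den :: "complex \<Rightarrow> complex \<Rightarrow> complex" where
  "cert_den x X = (1-x^4*X^4)*(1-x^8*X^4)"

definition wz_cert :: "complex \<Rightarrow> complex \<Rightarrow> complex \<Rightarrow> complex" where
  "wz_cert x X u = (1+u^2)*(1-x^3*X*u)*(1-x^2*X*u)*cert_poly x X u / ((1-x*u^2)*u^2*cert_den x X)"

definition summand_ratio :: "complex \<Rightarrow> complex \<Rightarrow> complex \<Rightarrow> complex" where
  "summand_ratio x X u = (1-x^5*u^2)*(x^2*u^2)*(1+x^2*u^2)*(u-x^2*X)*(u-x*X)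
     / ((1-x*u^2)*(1+x^4*u^2)*(1-x^4*X*u)*(1-x^5*X*u)*u^2)"

definition weight_ratio :: "complex \<Rightarrow> complex \<Rightarrow> complex \<Rightarrow> complex" where
  "weight_ratio x X u = (u-x^2*X)*(1-x^2*X*u)*(u-x*X)*(1-x^3*X*u) / u^2"

definition rhs_ratio :: "complex \<Rightarrow> complex \<Rightarrow> complex" where
  "rhs_ratio x X = cert_den x X / ((1-x*X^2)*(1-x^3*X^2))"

lemma wz_polynomial_identity:
  fixes x X u :: complex
  shows "((1-x^4*X^4)*(1-x^8*X^4)*u^2
      - (u-x^2*X)*(1-x^2*X*u)*(u-x*X)*(1-x^3*X*u)*((1-x*X^2)*(1-x^3*X^2)))*(1-x*u^2)
   = (1+x^2*u^2)*(u-x^2*X)*(u-x*X)*(x^4*X^2*(1-x^3*X^2)*u^2 - x*(1+x)*X*(1-x^5*X^4)*u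
      + x*X^2*(1-x^3*X^2))
     - (1+u^2)*(1-x^3*X*u)*(1-x^2*X*u)*(x^2*X^2*(1-x^3*X^2)*u^2 - x*(1+x)*X*(1-x^5*X^4)*u
      + x^3*X^2*(1-x^3*X^2))"
  by algebra

lemma wz_rational_identity:
  fixes x X u :: complex
  assumes "u \<noteq> 0" "x \<noteq> 0" "1-x*u^2 \<noteq> 0" "1-x^5*u^2 \<noteq> 0" "1+x^4*u^2 \<noteq> 0"
    "1-x^4*X*u \<noteq> 0" "1-x^5*X*u \<noteq> 0" "cert_den x X \<noteq> 0" "1-x*X^2 \<noteq> 0" "1-x^3*X^2 \<noteq> 0"
  shows "summand_ratio x X u * wz_cert x X (x^2*u) - wz_cert x X u
    = 1 - weight_ratio x X u / rhs_ratio x X"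
proof -
  define K where "K = x^4*X^2*(1-x^3*X^2)*u^2 - x*(1+x)*X*(1-x^5*X^4)*u + x*X^2*(1-x^3*X^2)"
  define L where "L = (1+x^2*u^2)*(u-x^2*X)*(u-x*X)*K - (1+u^2)*(1-x^3*X*u)*(1-x^2*X*u)*cert_poly x X u"
  define R where "R = u^2 * cert_den x X
      - (u-x^2*X)*(1-x^2*X*u)*(u-x*X)*(1-x^3*X*u)*((1-x*X^2)*(1-x^3*X^2))"
  have K: "cert_poly x X (x^2*u) = x^2*K" unfolding cert_poly_def K_def by algebra
  have W: "wz_cert x X (x^2*u) = (1+x^4*u^2)*(1-x^5*X*u)*(1-x^4*X*u)*(x^2*K)
      / ((1-x^5*u^2)*(x^4*u^2)*cert_den x X)"
    unfolding wz_cert_def K by (intro arg_cong2[where f="(/)"]; algebra)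
  have "summand_ratio x X u * wz_cert x X (x^2*u)
      = (1+x^2*u^2)*(u-x^2*X)*(u-x*X)*K / ((1-x*u^2)*u^2*cert_den x X)"
    unfolding W summand_ratio_def times_divide_times_eq
    by (rule frac_eq_eq[THEN iffD2]) (use assms in simp, use assms in simp, algebra)
  then have "summand_ratio x X u * wz_cert x X (x^2*u) - wz_cert x X u
      = L / ((1-x*u^2)*u^2*cert_den x X)"
    by (simp add: wz_cert_def L_def diff_divide_distrib)
  also have "\<dots> = R / (u^2 * cert_den x X)"
  proof (rule frac_eq_eq[THEN iffD2])
    have "R * (1-x*u^2) = L"
      using wz_polynomial_identity[of x X u]
      unfolding R_def L_def K_def cert_poly_def cert_den_def by (simp add: mult.commute)
    then show "L * (u^2 * cert_den x X) = R * ((1-x*u^2)*u^2*cert_den x X)"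
      by (simp add: mult.assoc)
  qed (use assms in simp_all)
  also have "\<dots> = 1 - weight_ratio x X u / rhs_ratio x X"
    unfolding R_def weight_ratio_def rhs_ratio_def using assms by (simp add: field_simps)
  finally show ?thesis .
qed

lemma weight_ratio_eq:
  fixes x X u :: complex
  assumes "u \<noteq> 0"
  shows "weight_ratio x X u = (1 - x^2*X/u) * (1 - x^2*X*u) * (1 - x*X/u) * (1 - x^3*X*u)"
  unfolding weight_ratio_def using assms by (simp add: field_simps power2_eq_square)

lemma wz_cert_upper:
  fixes x X :: complex
  assumes "x \<noteq> 0" "X \<noteq> 0" "cert_den x X \<noteq> 0" "1 - x*(x^2*X)^2 \<noteq> 0"
  shows "wz_cert x X (x^2*X) = -1"
proof -
  have "(1+(x^2*X)^2)*(1-x^3*X*(x^2*X))*(1-x^2*X*(x^2*X))*cert_poly x X (x^2*X)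
     = - ((1 - x*(x^2*X)^2) * (x^2*X)^2 * cert_den x X)"
    unfolding cert_poly_def cert_den_def by algebra
  then show ?thesis unfolding wz_cert_def using assms by simp
qed

lemma wz_cert_lower:
  fixes x X u :: complex
  assumes "1 - x^2*X*u = 0"
  shows "wz_cert x X u = 0"
  unfolding wz_cert_def using assms by simp

section \<open>The terminating bilateral identity\<close>

lemma divide_eq_divide_times_ratio:
  fixes a b c d A1 B1 A2 B2 :: "'a :: field"
  assumes "c * A1 = a * B1" "d * A2 = b * B2" "A1 \<noteq> 0" "A2 \<noteq> 0" "b \<noteq> 0" "B2 \<noteq> 0"
  shows "c / d = a / b * (B1 * A2 / (A1 * B2))"
proof -
  have c: "c = a * B1 / A1" and d: "d = b * B2 / A2" using assms by (simp_all add: field_simps)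
  show ?thesis unfolding c d using assms by (simp add: field_simps)
qed

definition mock_summand :: "complex \<Rightarrow> int \<Rightarrow> complex" where
  "mock_summand x n = (1 - x * ((x^2) powi n)^2) * (x^2) powi (n*n) * bilat_coeff (x^2) n"

definition wz_weight :: "complex \<Rightarrow> nat \<Rightarrow> int \<Rightarrow> complex" where
  "wz_weight x N n = qpoch (x^2) (x^2) (nat (int N - n)) * qpoch (x^2) (x^2) (nat (int N + n))
    * qpoch x (x^2) (nat (int N - n)) * qpoch x (x^2) (nat (int N + n + 1))"

definition wz_summand :: "complex \<Rightarrow> nat \<Rightarrow> int \<Rightarrow> complex" where
  "wz_summand x N n = mock_summand x n / wz_weight x N n"

definition wz_rhs :: "complex \<Rightarrow> nat \<Rightarrow> complex" where
  "wz_rhs x N = qpoch x (x^2) (2*N) / qpoch ((x^2)^2) ((x^2)^2) (2*N)"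

definition wz_weight_limit :: "complex \<Rightarrow> complex" where
  "wz_weight_limit x = qpoch_inf (x^2) (x^2) ^ 2 * qpoch_inf x (x^2) ^ 2"

context
  fixes x :: complex
  assumes x0: "x \<noteq> 0" and x1: "norm x < 1"
begin

lemma norm_power_int_eq_one_iff: "norm (x powi k) = 1 \<longleftrightarrow> k = 0"
proof
  assume norm_one: "norm (x powi k) = 1"
  show "k = 0"
  proof (rule ccontr)
    assume "k \<noteq> 0"
    then consider "0 < k" | "k < 0" by linarith
    then have "norm x powi k \<noteq> norm x powi 0"
      using x0 x1 power_int_strict_decreasing[of 0 k "norm x"] power_int_strict_decreasing[of k 0 "norm x"]
      by cases auto
    then show False using norm_one by (simp add: norm_power_int)
  qed
qed simp

lemma power_int_eq_one_iff: "x powi k = 1 \<longleftrightarrow> k = 0"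
  using norm_power_int_eq_one_iff[of k] by auto

lemma one_plus_power_int_nonzero: "1 + x powi k \<noteq> 0"
proof
  assume "1 + x powi k = 0"
  then have "x powi k = -1" by (simp add: add_eq_0_iff)
  then have "norm (x powi k) = 1" "k = 0" using norm_power_int_eq_one_iff[of k] by auto
  then show False using \<open>x powi k = -1\<close> by simp
qed

lemma powi_add_normalize:
  "x ^ k * x powi m = x powi (int k + m)" "x powi m * x ^ k = x powi (m + int k)"
  "x powi m * x powi l = x powi (m + l)" "x * x powi m = x powi (1 + m)"
  "x powi m / x powi l = x powi (m - l)" "x ^ k / x powi m = x powi (int k - m)"
  using x0 by (simp_all add: power_int_add power_int_diff)

lemma powi_mult_normalize:
  "(x powi m) ^ k = x powi (m * int k)" "(x^2) powi n = x powi (2 * n)"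
  "(x^2) ^ N = x powi (2 * int N)"
  by (simp add: power_int_mult power_int_power, simp add: power_int_mult,
      simp add: power_int_mult flip: power_mult)

lemmas powi_normalize = powi_add_normalize powi_mult_normalize

lemma qpoch_square_nonzero: "qpoch (x^2) (x^2) k \<noteq> 0"
  using norm_square_less_one[OF x1] by (simp add: qpoch_nonzero)

lemma qpoch_x_nonzero: "qpoch x (x^2) k \<noteq> 0"
  using norm_square_less_one[OF x1] x1 by (simp add: qpoch_nonzero)

lemma wz_weight_nonzero: "wz_weight x N n \<noteq> 0"
  unfolding wz_weight_def using qpoch_square_nonzero qpoch_x_nonzero by simp

lemma mock_summand_step:
  fixes n :: int
  defines "u \<equiv> (x^2) powi n"
  shows "mock_summand x (n+1) * ((1 - x*u^2) * (1 + (x^2)^2*u^2))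
    = mock_summand x n * ((1 - x*(x^2)^2*u^2) * (x^2*u^2) * (1 + x^2*u^2))"
proof -
  have "(x^2) powi (n+1) = x^2 * u" unfolding u_def using x0 by (simp add: power_int_add)
  moreover have "(x^2) powi ((n+1)*(n+1)) = (x^2) powi (n*n) * (x^2 * u^2)"
    unfolding u_def using x0
    by (simp add: algebra_simps power_int_add power_int_mult power2_eq_square mult_ac)
  moreover have "bilat_coeff (x^2) (n+1) * (1 + (x^2)^2 * u^2) = bilat_coeff (x^2) n * (1 + x^2 * u^2)"
    unfolding u_def using x0 norm_square_less_one[OF x1] by (intro bilat_coeff_step) auto
  ultimately show ?thesis unfolding mock_summand_def u_def[symmetric] by algebra
qed

lemma wz_weight_Suc:
  fixes n :: int and N :: nat
  defines "u \<equiv> (x^2) powi n" and "X \<equiv> (x^2)^N"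
  assumes "- int N \<le> n" "n \<le> int N"
  shows "wz_weight x (Suc N) n
    = wz_weight x N n * ((1 - x^2*X/u) * (1 - x^2*X*u) * (1 - x*X/u) * (1 - x^3*X*u))"
proof -
  have a: "nat (int (Suc N) - n) = nat ((int N - n) + 1)" "nat (int (Suc N) + n) = nat ((int N + n) + 1)"
    "nat (int (Suc N) + n + 1) = nat ((int N + n + 1) + 1)" by simp_all
  have e: "x^2 * (x^2) powi (int N - n) = x^2*X/u" "x^2 * (x^2) powi (int N + n) = x^2*X*u"
    "x * (x^2) powi (int N - n) = x*X/u" "x * (x^2) powi (int N + n + 1) = x^3*X*u"
    unfolding X_def u_def by (simp_all add: powi_normalize) (simp_all add: algebra_simps)
  have q: "qpoch (x^2) (x^2) (nat (int (Suc N) - n)) = qpoch (x^2) (x^2) (nat (int N - n)) * (1 - x^2*X/u)"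
    "qpoch (x^2) (x^2) (nat (int (Suc N) + n)) = qpoch (x^2) (x^2) (nat (int N + n)) * (1 - x^2*X*u)"
    "qpoch x (x^2) (nat (int (Suc N) - n)) = qpoch x (x^2) (nat (int N - n)) * (1 - x*X/u)"
    "qpoch x (x^2) (nat (int (Suc N) + n + 1)) = qpoch x (x^2) (nat (int N + n + 1)) * (1 - x^3*X*u)"
    unfolding a e[symmetric] by (rule qpoch_nat_add_one, use assms in simp)+
  show ?thesis unfolding wz_weight_def q by (simp only: mult_ac)
qed

lemma wz_weight_shift:
  fixes n :: int and N :: nat
  defines "u \<equiv> (x^2) powi n" and "X \<equiv> (x^2)^N"
  assumes "- int (Suc N) \<le> n" "n \<le> int N"
  shows "wz_weight x (Suc N) (n+1) * ((1 - x^2*X/u) * (1 - x*X/u))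
    = wz_weight x (Suc N) n * ((1 - x^4*X*u) * (1 - x^5*X*u))"
proof -
  have a: "nat (int (Suc N) - n) = nat ((int (Suc N) - (n+1)) + 1)"
    "nat (int (Suc N) + (n+1)) = nat ((int (Suc N) + n) + 1)"
    "nat (int (Suc N) + (n+1) + 1) = nat ((int (Suc N) + n + 1) + 1)" by simp_all
  have e: "x^2 * (x^2) powi (int (Suc N) - (n+1)) = x^2*X/u"
    "x^2 * (x^2) powi (int (Suc N) + n) = x^4*X*u"
    "x * (x^2) powi (int (Suc N) - (n+1)) = x*X/u" "x * (x^2) powi (int (Suc N) + n + 1) = x^5*X*u"
    unfolding X_def u_def by (simp_all add: powi_normalize) (simp_all add: algebra_simps)
  have q: "qpoch (x^2) (x^2) (nat (int (Suc N) - n))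
      = qpoch (x^2) (x^2) (nat (int (Suc N) - (n+1))) * (1 - x^2*X/u)"
    "qpoch (x^2) (x^2) (nat (int (Suc N) + (n+1))) = qpoch (x^2) (x^2) (nat (int (Suc N) + n)) * (1 - x^4*X*u)"
    "qpoch x (x^2) (nat (int (Suc N) - n)) = qpoch x (x^2) (nat (int (Suc N) - (n+1))) * (1 - x*X/u)"
    "qpoch x (x^2) (nat (int (Suc N) + (n+1) + 1))
      = qpoch x (x^2) (nat (int (Suc N) + n + 1)) * (1 - x^5*X*u)"
    unfolding a e[symmetric] by (rule qpoch_nat_add_one, use assms in simp)+
  show ?thesis unfolding wz_weight_def q by (simp only: mult_ac)
qed

lemma wz_summand_shift:
  fixes n :: int and N :: nat
  defines "u \<equiv> (x^2) powi n" and "X \<equiv> (x^2)^N"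
  assumes n1: "- int (Suc N) \<le> n" and n2: "n \<le> int N"
  shows "wz_summand x (Suc N) (n+1) = wz_summand x (Suc N) n * summand_ratio x X u"
proof -
  have u0: "u \<noteq> 0" unfolding u_def using x0 by simp
  have A1: "(1 - x*u^2) * (1 + (x^2)^2*u^2) \<noteq> 0" unfolding u_def
    by (simp add: powi_normalize power_int_eq_one_iff one_plus_power_int_nonzero; presburger)
  have A2: "(1 - x^2*X/u) * (1 - x*X/u) \<noteq> 0" unfolding u_def X_def
    using n2 by (simp add: powi_normalize power_int_eq_one_iff; presburger)
  have B2: "(1 - x^4*X*u) * (1 - x^5*X*u) \<noteq> 0" unfolding u_def X_def
    using n1 by (simp add: powi_normalize power_int_eq_one_iff; presburger)
  have "wz_summand x (Suc N) (n+1) = wz_summand x (Suc N) n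
    * (((1 - x*(x^2)^2*u^2) * (x^2*u^2) * (1 + x^2*u^2)) * ((1 - x^2*X/u) * (1 - x*X/u))
       / (((1 - x*u^2) * (1 + (x^2)^2*u^2)) * ((1 - x^4*X*u) * (1 - x^5*X*u))))"
    unfolding wz_summand_def
    by (rule divide_eq_divide_times_ratio[OF mock_summand_step[of n, folded u_def]
          wz_weight_shift[OF n1 n2, folded u_def X_def] A1 A2 wz_weight_nonzero B2])
  also have "(1 - x^2*X/u) * (1 - x*X/u) = (u - x^2*X) * (u - x*X) / u^2"
    using u0 by (simp add: field_simps power2_eq_square)
  also have "((1 - x*(x^2)^2*u^2) * (x^2*u^2) * (1 + x^2*u^2)) * ((u - x^2*X) * (u - x*X) / u^2)
       / (((1 - x*u^2) * (1 + (x^2)^2*u^2)) * ((1 - x^4*X*u) * (1 - x^5*X*u)))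
      = summand_ratio x X u"
    unfolding summand_ratio_def times_divide_eq_right divide_divide_eq_left
    by (rule frac_eq_eq[THEN iffD2]) (use A1 B2 u0 in simp,
        use A1 B2 u0 in \<open>simp add: power_mult_distrib flip: power_mult\<close>, algebra)
  finally show ?thesis .
qed

lemma wz_summand_telescope:
  fixes n :: int and N :: nat
  defines "u \<equiv> (x^2) powi n" and "X \<equiv> (x^2)^N"
  assumes n1: "- int (Suc N) \<le> n" and n2: "n \<le> int N"
  shows "wz_summand x (Suc N) (n+1) * wz_cert x X ((x^2) powi (n+1))
      - wz_summand x (Suc N) n * wz_cert x X u
    = wz_summand x (Suc N) n * (1 - weight_ratio x X u / rhs_ratio x X)"
proof -
  have "(x^2) powi (n+1) = x^2 * u" unfolding u_def using x0 by (simp add: power_int_add)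
  moreover have "summand_ratio x X u * wz_cert x X (x^2*u) - wz_cert x X u
      = 1 - weight_ratio x X u / rhs_ratio x X"
  proof (rule wz_rational_identity)
    show "u \<noteq> 0" unfolding u_def using x0 by simp
    show "1 - x*u^2 \<noteq> 0" "1 - x^5*u^2 \<noteq> 0" "1 + x^4*u^2 \<noteq> 0" unfolding u_def
      by (simp_all add: powi_normalize power_int_eq_one_iff one_plus_power_int_nonzero; presburger)+
    show "1 - x^4*X*u \<noteq> 0" "1 - x^5*X*u \<noteq> 0" unfolding u_def X_def
      using n1 by (simp_all add: powi_normalize power_int_eq_one_iff; presburger)+
    show "cert_den x X \<noteq> 0" "1 - x*X^2 \<noteq> 0" "1 - x^3*X^2 \<noteq> 0" unfolding cert_den_def X_def
      by (simp_all add: powi_normalize power_int_eq_one_iff)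
  qed (use x0 in simp)
  moreover have "wz_summand x (Suc N) n * summand_ratio x X u * wz_cert x X (x^2*u)
      - wz_summand x (Suc N) n * wz_cert x X u
    = wz_summand x (Suc N) n * (summand_ratio x X u * wz_cert x X (x^2*u) - wz_cert x X u)"
    by (simp add: algebra_simps)
  ultimately show ?thesis
    unfolding wz_summand_shift[OF n1 n2, folded u_def X_def] by simp
qed

lemma wz_rhs_Suc: "wz_rhs x (Suc N) = wz_rhs x N / rhs_ratio x ((x^2)^N)"
proof -
  define X where "X = (x^2)^N"
  have r: "wz_rhs x (Suc N) = qpoch x (x^2) (2*N) * (1 - x*X^2) * (1 - x^3*X^2) /
       (qpoch ((x^2)^2) ((x^2)^2) (2*N) * (1 - x^4*X^4) * (1 - x^8*X^4))"
  proof -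
    have X2: "(x^2)^(2*N) = X^2" and X4: "((x^2)^2)^(2*N) = X^4"
      unfolding X_def by (simp_all flip: power_mult add: mult.commute)
    have f: "x * (x^2)^(2*N) = x*X^2" "x * (x^2)^(Suc (2*N)) = x^3*X^2"
      "(x^2)^2 * ((x^2)^2)^(2*N) = x^4*X^4" "(x^2)^2 * ((x^2)^2)^(Suc (2*N)) = x^8*X^4"
      unfolding power_Suc X2 X4 by algebra+
    have e: "2 * Suc N = Suc (Suc (2*N))" by simp
    show ?thesis unfolding wz_rhs_def e qpoch_Suc f by (simp only: mult.assoc)
  qed
  show ?thesis
    unfolding r X_def[symmetric] unfolding wz_rhs_def rhs_ratio_def cert_den_def divide_divide_times_eq
    by (simp only: mult.assoc)
qed

lemma wz_summand_Suc:
  assumes "- int N \<le> n" "n \<le> int N"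
  shows "wz_summand x (Suc N) n * weight_ratio x ((x^2)^N) ((x^2) powi n) = wz_summand x N n"
proof -
  have "(x^2) powi n \<noteq> 0" using x0 by simp
  then have W: "wz_weight x (Suc N) n = wz_weight x N n * weight_ratio x ((x^2)^N) ((x^2) powi n)"
    using wz_weight_Suc[OF assms] by (simp add: weight_ratio_eq)
  then have "weight_ratio x ((x^2)^N) ((x^2) powi n) \<noteq> 0"
    using wz_weight_nonzero[of "Suc N" n] by auto
  then show ?thesis unfolding wz_summand_def W by simp
qed

lemma wz_summand_weighted_sum:
  "(\<Sum>n\<in>{- int (Suc N)..<int (Suc N)}. wz_summand x (Suc N) n * weight_ratio x ((x^2)^N) ((x^2) powi n))
    = (\<Sum>n\<in>{-int N..int N}. wz_summand x N n)"
proof -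
  have "{- int (Suc N)..<int (Suc N)} = insert (- int (Suc N)) {-int N..int N}" by auto
  moreover have "weight_ratio x ((x^2)^N) ((x^2) powi (- int (Suc N))) = 0"
    unfolding weight_ratio_def using x0
    by (simp add: power_int_def power_inverse nat_add_distrib field_simps)
  ultimately show ?thesis by (simp add: wz_summand_Suc)
qed

text \<open>At the upper end the certificate equals \<open>-1\<close> and at the lower end it vanishes, so the
  telescoping sum collapses to a single boundary term.\<close>
lemma wz_summand_telescope_sum:
  "(\<Sum>n\<in>{- int (Suc N)..<int (Suc N)}.
      wz_summand x (Suc N) n * (1 - weight_ratio x ((x^2)^N) ((x^2) powi n) / rhs_ratio x ((x^2)^N)))
    = - wz_summand x (Suc N) (int (Suc N))"
proof -
  define X where "X = (x^2)^N"
  define a where "a n = wz_summand x (Suc N) n * wz_cert x X ((x^2) powi n)" for n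
  have "(\<Sum>n\<in>{- int (Suc N)..<int (Suc N)}.
      wz_summand x (Suc N) n * (1 - weight_ratio x X ((x^2) powi n) / rhs_ratio x X))
    = (\<Sum>n\<in>{- int (Suc N)..<- int (Suc N) + int (2 * Suc N)}. a (n + 1) - a n)"
    unfolding a_def X_def by (intro sum.cong) (auto simp: wz_summand_telescope)
  also have "\<dots> = a (int (Suc N)) - a (- int (Suc N))"
    by (subst sum_int_telescope) simp
  also have "a (int (Suc N)) = - wz_summand x (Suc N) (int (Suc N))"
  proof -
    have "(x^2) powi int (Suc N) = x^2 * X" using x0 by (simp add: X_def power_int_add)
    moreover have "X \<noteq> 0" "cert_den x X \<noteq> 0" "1 - x*(x^2*X)^2 \<noteq> 0"
      unfolding cert_den_def X_def using x0 by (simp_all add: powi_normalize power_int_eq_one_iff)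
    ultimately show ?thesis unfolding a_def using wz_cert_upper x0 by simp
  qed
  also have "a (- int (Suc N)) = 0"
  proof -
    have "1 - x^2 * X * (x^2) powi (- int (Suc N)) = 0" unfolding X_def using x0
      by (simp add: power_int_def power_inverse nat_add_distrib field_simps)
    then show ?thesis unfolding a_def by (simp add: wz_cert_lower)
  qed
  finally show ?thesis unfolding X_def by simp
qed

lemma wz_finite_identity: "(\<Sum>n\<in>{-int N..int N}. wz_summand x N n) = wz_rhs x N"
proof (induction N)
  case 0
  have "x \<noteq> 1" using x1 by auto
  then show ?case
    by (simp add: wz_summand_def mock_summand_def wz_weight_def bilat_coeff_def wz_rhs_def qpoch_def)
next
  case (Suc N)
  define g where "g = wz_summand x (Suc N)"
  define D where "D n = weight_ratio x ((x^2)^N) ((x^2) powi n)" for n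
  define C where "C = rhs_ratio x ((x^2)^N)"
  define I where "I = {- int (Suc N)..<int (Suc N)}"
  have "(\<Sum>n\<in>I. g n) = (\<Sum>n\<in>I. g n * (1 - D n / C)) + (\<Sum>n\<in>I. g n * D n) / C"
    by (simp add: sum_divide_distrib flip: sum.distrib) (simp add: algebra_simps)
  also have "\<dots> = - g (int (Suc N)) + wz_rhs x N / C"
    unfolding g_def D_def C_def I_def wz_summand_telescope_sum wz_summand_weighted_sum Suc.IH ..
  finally have "(\<Sum>n\<in>I. g n) + g (int (Suc N)) = wz_rhs x (Suc N)"
    by (simp add: wz_rhs_Suc C_def)
  moreover have "{-int (Suc N)..int (Suc N)} = insert (int (Suc N)) I" by (auto simp: I_def)
  ultimately show ?case by (simp add: I_def g_def add.commute)
qed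

section \<open>Passage to the limit\<close>

lemma wz_weight_LIMSEQ: "(\<lambda>N. wz_weight x N n) \<longlonglongrightarrow> wz_weight_limit x"
proof -
  have "wz_weight x N n = qpoch (x^2) (x^2) (nat (int N + - n)) * qpoch (x^2) (x^2) (nat (int N + n))
      * qpoch x (x^2) (nat (int N + - n)) * qpoch x (x^2) (nat (int N + (n + 1)))" for N
    by (simp add: wz_weight_def add.assoc)
  moreover have "wz_weight_limit x = qpoch_inf (x^2) (x^2) * qpoch_inf (x^2) (x^2)
      * qpoch_inf x (x^2) * qpoch_inf x (x^2)"
    by (simp add: wz_weight_limit_def power2_eq_square)
  ultimately show ?thesis
    using norm_square_less_one[OF x1] x1 by (simp only:) (intro tendsto_mult qpoch_nat_add_const_LIMSEQ; simp)
qed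

lemma wz_weight_limit_nonzero: "wz_weight_limit x \<noteq> 0"
  using norm_square_less_one[OF x1] x1 by (simp add: wz_weight_limit_def qpoch_inf_nonzero)

lemma wz_weight_inverse_bounded: "\<exists>B. \<forall>N n. norm (1 / wz_weight x N n) \<le> B"
proof -
  define C where "C = exp (norm (x^2) / ((1 - norm (x^2)) * (1 - norm (x^2))))"
  define D where "D = exp (norm x / ((1 - norm x) * (1 - norm (x^2))))"
  have "norm (1 / wz_weight x N n) \<le> C * C * (D * D)" for N n
  proof -
    have "norm (1 / wz_weight x N n)
      = norm (1 / qpoch (x^2) (x^2) (nat (int N - n))) * norm (1 / qpoch (x^2) (x^2) (nat (int N + n)))
        * (norm (1 / qpoch x (x^2) (nat (int N - n))) * norm (1 / qpoch x (x^2) (nat (int N + n + 1))))"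
      unfolding wz_weight_def by (simp add: norm_mult norm_divide)
    also have "\<dots> \<le> C * C * (D * D)"
      unfolding C_def D_def using norm_square_less_one[OF x1] x1
      by (intro mult_mono norm_inverse_qpoch_le mult_nonneg_nonneg norm_ge_zero) auto
    finally show ?thesis .
  qed
  then show ?thesis by blast
qed

lemma mock_summand_nat: "mock_summand x (int k) = S0_term (x^2) k - x * S1_term (x^2) k"
proof -
  have "(x^2) ^ (k * (k + 2)) = (x^2) ^ (k^2) * ((x^2) ^ k)^2"
    by (simp add: power2_eq_square algebra_simps flip: power_add power_mult)
  then show ?thesis
    unfolding mock_summand_def S0_term_def S1_term_def bilat_coeff_nat
    by (simp add: power2_eq_square algebra_simps flip: of_nat_mult)
qed

lemma mock_summand_neg:
  "mock_summand x (- int (Suc k)) = 2 * T0_term (x^2) k - 2 * x * T1_term (x^2) k"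
proof -
  define P where "P = (x^2) ^ Suc k"
  define c where "c = qpoch (-((x^2)^2)) ((x^2)^2) k / qpoch (-(x^2)) ((x^2)^2) (k+1)"
  have "P \<noteq> 0" using x0 by (simp add: P_def)
  have "(x^2) powi (- int (Suc k)) = inverse P"
    by (simp add: P_def power_int_def power_inverse nat_add_distrib)
  moreover have "(x^2) powi (- int (Suc k) * - int (Suc k)) = (x^2) ^ ((k+1)*(k+1))"
  proof -
    have "- int (Suc k) * - int (Suc k) = int ((k+1)*(k+1))" by (simp add: algebra_simps)
    then show ?thesis by (simp only: power_int_of_nat)
  qed
  moreover have "bilat_coeff (x^2) (- int (Suc k)) = P * (2 * c)"
    unfolding bilat_coeff_neg qpoch_minus_one_Suc P_def c_def by simp
  ultimately have "mock_summand x (- int (Suc k))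
      = 2 * c * ((x^2)^((k+1)*(k+1)) * P) - 2 * c * x * ((x^2)^((k+1)*(k+1)) * P) * (inverse P)^2"
    unfolding mock_summand_def by (simp add: algebra_simps)
  also have "\<dots> = 2 * c * (x^2)^((k+1)*(k+2)) - 2 * c * x * (x^2)^(k*(k+1))"
  proof -
    have e1: "(x^2)^((k+1)*(k+1)) * P = (x^2)^((k+1)*(k+2))"
      and e2: "(x^2)^((k+1)*(k+2)) = (x^2)^(k*(k+1)) * P^2"
      unfolding P_def by (simp_all add: algebra_simps power2_eq_square flip: power_add)
    show ?thesis unfolding e1 unfolding e2 using \<open>P \<noteq> 0\<close> by (simp add: power2_eq_square field_simps)
  qed
  finally show ?thesis unfolding T0_term_def T1_term_def c_def by (simp add: algebra_simps)
qed

lemma summable_norm_mock_summand_nat: "summable (\<lambda>k. norm (mock_summand x (int k)))"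
  unfolding mock_summand_nat using summable_norm_diff_scaled[of "S0_term (x^2)" "S1_term (x^2)" 1 x]
  by (simp add: summable_norm_S0_term summable_norm_S1_term norm_square_less_one[OF x1])

lemma summable_norm_mock_summand_neg: "summable (\<lambda>k. norm (mock_summand x (- int (Suc k))))"
  unfolding mock_summand_neg
  by (intro summable_norm_diff_scaled summable_norm_T0_term summable_norm_T1_term norm_square_less_one[OF x1])

lemma suminf_mock_summand_nat: "(\<Sum>k. mock_summand x (int k)) = S0 (x^2) - x * S1 (x^2)"
  unfolding mock_summand_nat S0_eq_suminf S1_eq_suminf
  using suminf_diff_scaled[of "S0_term (x^2)" "S1_term (x^2)" 1 x]
  by (simp add: summable_norm_S0_term summable_norm_S1_term norm_square_less_one[OF x1])

lemma suminf_mock_summand_neg: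
  "(\<Sum>k. mock_summand x (- int (Suc k))) = 2 * T0 (x^2) - 2 * x * T1 (x^2)"
  unfolding mock_summand_neg T0_eq_suminf T1_eq_suminf
  by (intro suminf_diff_scaled summable_norm_T0_term summable_norm_T1_term norm_square_less_one[OF x1])

lemma wz_rhs_LIMSEQ: "(\<lambda>N. wz_rhs x N) \<longlonglongrightarrow> qpoch_inf x (x^2) / qpoch_inf ((x^2)^2) ((x^2)^2)"
proof -
  have "strict_mono (\<lambda>N::nat. 2 * N)" by (simp add: strict_mono_def)
  moreover have "norm ((x^2)^2) < 1" using norm_square_less_one[OF norm_square_less_one[OF x1]] .
  ultimately show ?thesis
    unfolding wz_rhs_def using norm_square_less_one[OF x1] x1
    by (intro tendsto_divide qpoch_inf_nonzero LIMSEQ_subseq_LIMSEQ[OF qpoch_LIMSEQ, unfolded o_def])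
      auto
qed

lemma bilateral_mock_identity:
  "(S0 (x^2) - x * S1 (x^2)) + (2 * T0 (x^2) - 2 * x * T1 (x^2))
    = wz_weight_limit x * (qpoch_inf x (x^2) / qpoch_inf ((x^2)^2) ((x^2)^2))"
proof -
  obtain B where B: "\<And>N n. norm (1 / wz_weight x N n) \<le> B"
    using wz_weight_inverse_bounded by blast
  have "wz_rhs x N = (\<Sum>k<Suc N. mock_summand x (int k) / wz_weight x N (int k))
      + (\<Sum>k<N. mock_summand x (- int (Suc k)) / wz_weight x N (- int (Suc k)))" for N
    unfolding wz_finite_identity[symmetric] sum_symmetric_int_interval wz_summand_def ..
  moreover have "(\<lambda>N. (\<Sum>k<Suc N. mock_summand x (int k) / wz_weight x N (int k))
      + (\<Sum>k<N. mock_summand x (- int (Suc k)) / wz_weight x N (- int (Suc k))))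
    \<longlonglongrightarrow> (\<Sum>k. mock_summand x (int k) / wz_weight_limit x)
      + (\<Sum>k. mock_summand x (- int (Suc k)) / wz_weight_limit x)"
    by (intro tendsto_add tannery_quotient_LIMSEQ[OF wz_weight_LIMSEQ wz_weight_limit_nonzero B]
        summable_norm_mock_summand_nat summable_norm_mock_summand_neg filterlim_Suc filterlim_ident)
  ultimately have lim: "(\<Sum>k. mock_summand x (int k) / wz_weight_limit x)
      + (\<Sum>k. mock_summand x (- int (Suc k)) / wz_weight_limit x)
    = qpoch_inf x (x^2) / qpoch_inf ((x^2)^2) ((x^2)^2)"
    using wz_rhs_LIMSEQ by (auto intro: LIMSEQ_unique)
  have "summable (\<lambda>k. mock_summand x (int k))" "summable (\<lambda>k. mock_summand x (- int (Suc k)))"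
    using summable_norm_mock_summand_nat summable_norm_mock_summand_neg by (auto intro: summable_norm_cancel)
  from lim have "((S0 (x^2) - x * S1 (x^2)) + (2 * T0 (x^2) - 2 * x * T1 (x^2))) / wz_weight_limit x
    = qpoch_inf x (x^2) / qpoch_inf ((x^2)^2) ((x^2)^2)"
    unfolding suminf_divide[OF \<open>summable (\<lambda>k. mock_summand x (int k))\<close>]
      suminf_divide[OF \<open>summable (\<lambda>k. mock_summand x (- int (Suc k)))\<close>]
      suminf_mock_summand_nat suminf_mock_summand_neg add_divide_distrib .
  then show ?thesis using wz_weight_limit_nonzero by (simp add: field_simps)
qed

lemma mock_combination_identity:
  "(S0 (x^2) + 2 * T0 (x^2)) - x * (S1 (x^2) + 2 * T1 (x^2))
    = qpoch_inf (x^2) (x^2) * qpoch_inf x (x^2) ^ 3 / qpoch_inf (-(x^2)) (x^2)"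
proof -
  have "qpoch_inf (x^2) (x^2) \<noteq> 0" "qpoch_inf (-(x^2)) (x^2) \<noteq> 0"
    using norm_square_less_one[OF x1] by (simp_all add: qpoch_inf_nonzero)
  then show ?thesis
    using bilateral_mock_identity qpoch_inf_square[OF norm_square_less_one[OF x1]]
    by (simp add: wz_weight_limit_def field_simps power2_eq_square power3_eq_cube)
qed

end

theorem mainTheorem13:
  fixes q :: complex
  assumes "norm q < 1"
  shows "S0 (q^2) + 2 * T0 (q^2) =
           qpoch_inf (q^2) (q^2) * (qpoch_inf q (q^2) ^ 3 + qpoch_inf (-q) (q^2) ^ 3)
             / (2 * qpoch_inf (-(q^2)) (q^2))
       \<and> (q \<noteq> 0 \<longrightarrow>
          S1 (q^2) + 2 * T1 (q^2) =
           qpoch_inf (q^2) (q^2) * (qpoch_inf (-q) (q^2) ^ 3 - qpoch_inf q (q^2) ^ 3)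
             / (2 * q * qpoch_inf (-(q^2)) (q^2)))"
proof (cases "q = 0")
  case True
  have "S0 0 = 1"
    unfolding S0_eq_suminf by (subst suminf_finite[of "{0}"]) (auto simp: S0_term_def)
  then show ?thesis using True by (simp add: T0_def qpoch_inf_def)
next
  case False
  define E F Z c where "E = S0 (q^2) + 2 * T0 (q^2)" and "F = S1 (q^2) + 2 * T1 (q^2)"
    and "Z = qpoch_inf (q^2) (q^2)" and "c = qpoch_inf (-(q^2)) (q^2)"
  have plus: "E - q * F = Z * qpoch_inf q (q^2) ^ 3 / c"
    unfolding E_def F_def Z_def c_def using False assms by (rule mock_combination_identity)
  have minus: "E + q * F = Z * qpoch_inf (-q) (q^2) ^ 3 / c"
    using mock_combination_identity[of "-q"] False assms by (simp add: E_def F_def Z_def c_def)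
  have "c \<noteq> 0" unfolding c_def using assms by (simp add: qpoch_inf_nonzero norm_power power_less_one_iff)
  moreover have "2 * E = (E + q * F) + (E - q * F)" "2 * q * F = (E + q * F) - (E - q * F)"
    by (simp_all add: algebra_simps)
  ultimately show ?thesis
    unfolding plus minus E_def[symmetric] F_def[symmetric] Z_def[symmetric] c_def[symmetric]
    using False by (simp add: field_simps)
qed

end
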